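(* There is a family of classes $(K_f)_{f\in 2^\omega}$ such that $K_f\le_c PF$ for every $f\in 2^\omega$, and $K_f\perp K_g$ for all distinct $f,g\in 2^\omega$.
   Context: Conventions: every structure is for a finite relational language with universe a subset of $\omega$; a class is a collection of structures for one language closed under isomorphism. $D(\mathcal{A})$ is the atomic diagram of $\mathcal{A}$. A computable transformation from $K$ to $K'$ is a c.e. set $\Phi$ of pairs $(\alpha,\varphi)$, $\alpha$ a finite subset of the atomic diagram of a finite structure in the language of $K$, $\varphi$ an atomic sentence or negation of one in the language of $K'$, such that for every $\mathcal{A}\in K$, $\{\varphi:(\exists\alpha\subseteq D(\mathcal{A}))(\alpha,\varphi)\in\Phi\}=D(\mathcal{B})$ for some $\mathcal{B}\in K'$. A computable embedding is a computable transformation with $\mathcal{A}\cong\mathcal{A}'\iff\Phi(\mathcal{A})\cong\Phi(\mathcal{A}')$; $K\le_c K'$ means one exists; $K\perp K'$ means $K\not\le_c K'$ and $K'\not\le_c K$. $PF$ is the class of finite prime fields (in a relational language). *)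

theory Defs
  imports Main "HOL-Library.Nat_Bijection" "HOL-Computational_Algebra.Primes"
begin

datatype recf = Zf | Sf | Proj nat | Comp recf "recf list" | Prec recf recf | Minf recf

inductive reval :: "recf \<Rightarrow> nat list \<Rightarrow> nat \<Rightarrow> bool" where
  zero: "reval Zf xs 0"
| succ: "reval Sf (x # xs) (Suc x)"
| proj: "i < length xs \<Longrightarrow> reval (Proj i) xs (xs ! i)"
| comp: "list_all2 (\<lambda>g y. reval g xs y) gs ys \<Longrightarrow> reval f ys z \<Longrightarrow> reval (Comp f gs) xs z"
| prec0: "reval f xs y \<Longrightarrow> reval (Prec f g) (0 # xs) y"
| precS: "reval (Prec f g) (n # xs) y \<Longrightarrow> reval g (y # n # xs) z
           \<Longrightarrow> reval (Prec f g) (Suc n # xs) z"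
| mini: "reval f (n # xs) 0 \<Longrightarrow> (\<forall>i<n. \<exists>v. reval f (i # xs) (Suc v))
           \<Longrightarrow> reval (Minf f) xs n"

definition ce_set :: "nat set \<Rightarrow> bool" where
  "ce_set A \<longleftrightarrow> (\<exists>f. A = {n. \<exists>y. reval f [n] y})"

text \<open>A finite relational language is a list of arities; relation symbol i has arity sig!i.
  A structure is a pair (universe, interpretation of relation symbols).\<close>
type_synonym struc = "nat set \<times> (nat \<Rightarrow> nat list \<Rightarrow> bool)"

definition is_struc :: "nat list \<Rightarrow> struc \<Rightarrow> bool" where
  "is_struc sig A \<longleftrightarrow> fst A \<noteq> {} \<and>
     (\<forall>i as. snd A i as \<longrightarrow> i < length sig \<and> length as = sig ! i \<and> set as \<subseteq> fst A)"

definition iso :: "struc \<Rightarrow> struc \<Rightarrow> bool" where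
  "iso A B \<longleftrightarrow> (\<exists>h. bij_betw h (fst A) (fst B) \<and>
     (\<forall>i as. set as \<subseteq> fst A \<longrightarrow> (snd A i as \<longleftrightarrow> snd B i (map h as))))"

definition is_class :: "nat list \<Rightarrow> struc set \<Rightarrow> bool" where
  "is_class sig K \<longleftrightarrow> (\<forall>A\<in>K. is_struc sig A) \<and>
     (\<forall>A B. A \<in> K \<longrightarrow> is_struc sig B \<longrightarrow> iso A B \<longrightarrow> B \<in> K)"

datatype atom = AEq nat nat | ARel nat "nat list"
datatype lit = Pos atom | Neg atom

fun atom_in :: "nat list \<Rightarrow> atom \<Rightarrow> bool" where
  "atom_in sig (AEq a b) = True"
| "atom_in sig (ARel i as) = (i < length sig \<and> length as = sig ! i)"

fun lit_in :: "nat list \<Rightarrow> lit \<Rightarrow> bool" where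
  "lit_in sig (Pos a) = atom_in sig a"
| "lit_in sig (Neg a) = atom_in sig a"

definition diag :: "nat list \<Rightarrow> struc \<Rightarrow> lit set" where
  "diag sig A =
     {Pos (AEq a b) | a b. a \<in> fst A \<and> b \<in> fst A \<and> a = b} \<union>
     {Neg (AEq a b) | a b. a \<in> fst A \<and> b \<in> fst A \<and> a \<noteq> b} \<union>
     {Pos (ARel i as) | i as. i < length sig \<and> length as = sig ! i \<and> set as \<subseteq> fst A
                                \<and> snd A i as} \<union>
     {Neg (ARel i as) | i as. i < length sig \<and> length as = sig ! i \<and> set as \<subseteq> fst A
                                \<and> \<not> snd A i as}"

fun atom_code :: "atom \<Rightarrow> nat" where
  "atom_code (AEq a b) = prod_encode (0, prod_encode (a, b))"
| "atom_code (ARel i as) = prod_encode (1, prod_encode (i, list_encode as))"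

fun lit_code :: "lit \<Rightarrow> nat" where
  "lit_code (Pos a) = prod_encode (0, atom_code a)"
| "lit_code (Neg a) = prod_encode (1, atom_code a)"

definition pair_code :: "lit set \<times> lit \<Rightarrow> nat" where
  "pair_code p = prod_encode (set_encode (lit_code ` fst p), lit_code (snd p))"

definition transf_out :: "nat list \<Rightarrow> (lit set \<times> lit) set \<Rightarrow> struc \<Rightarrow> lit set" where
  "transf_out sig \<Phi> A = {\<phi>. \<exists>\<alpha>. \<alpha> \<subseteq> diag sig A \<and> (\<alpha>, \<phi>) \<in> \<Phi>}"

definition comp_transf ::
  "nat list \<Rightarrow> struc set \<Rightarrow> nat list \<Rightarrow> struc set \<Rightarrow> (lit set \<times> lit) set \<Rightarrow> bool" where
  "comp_transf sig K sig' K' \<Phi> \<longleftrightarrow>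
     (\<forall>(\<alpha>, \<phi>) \<in> \<Phi>. finite \<alpha> \<and>
         (\<exists>C. is_struc sig C \<and> finite (fst C) \<and> \<alpha> \<subseteq> diag sig C) \<and> lit_in sig' \<phi>) \<and>
     ce_set (pair_code ` \<Phi>) \<and>
     (\<forall>A\<in>K. \<exists>B\<in>K'. transf_out sig \<Phi> A = diag sig' B)"

definition comp_emb ::
  "nat list \<Rightarrow> struc set \<Rightarrow> nat list \<Rightarrow> struc set \<Rightarrow> (lit set \<times> lit) set \<Rightarrow> bool" where
  "comp_emb sig K sig' K' \<Phi> \<longleftrightarrow> comp_transf sig K sig' K' \<Phi> \<and>
     (\<forall>A A' B B'. A \<in> K \<longrightarrow> A' \<in> K \<longrightarrow> B \<in> K' \<longrightarrow> B' \<in> K' \<longrightarrow>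
        transf_out sig \<Phi> A = diag sig' B \<longrightarrow> transf_out sig \<Phi> A' = diag sig' B' \<longrightarrow>
        (iso A A' \<longleftrightarrow> iso B B'))"

definition le_c :: "nat list \<Rightarrow> struc set \<Rightarrow> nat list \<Rightarrow> struc set \<Rightarrow> bool" where
  "le_c sig K sig' K' \<longleftrightarrow> (\<exists>\<Phi>. comp_emb sig K sig' K' \<Phi>)"

definition incomparable :: "nat list \<Rightarrow> struc set \<Rightarrow> nat list \<Rightarrow> struc set \<Rightarrow> bool" where
  "incomparable sig K sig' K' \<longleftrightarrow> \<not> le_c sig K sig' K' \<and> \<not> le_c sig' K' sig K"

text \<open>Relational language: relation 0 is the graph of addition, relation 1 the graph
  of multiplication (both ternary).\<close>
definition PF_sig :: "nat list" where "PF_sig = [3, 3]"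

definition Zp_struc :: "nat \<Rightarrow> struc" where
  "Zp_struc p = ({0..<p}, \<lambda>i as. length as = 3 \<and> set as \<subseteq> {0..<p} \<and>
      ((i = 0 \<and> (as!0 + as!1) mod p = as!2) \<or> (i = 1 \<and> (as!0 * as!1) mod p = as!2)))"

definition PF :: "struc set" where
  "PF = {A. is_struc PF_sig A \<and> (\<exists>p::nat. prime p \<and> iso (Zp_struc p) A)}"

end

theory Submission
  imports Defs "HOL-Library.Countable"
begin

(*
  For a set Y of naturals let S(Y) be the structure (\<omega>, 0, successor, Y) and K_Y the class of
  its isomorphic copies.  Every K_Y consists of a single isomorphism type, so the constant
  transformation that outputs the diagram of Z/2Z is a computable embedding K_Y \<le>c PF.

  Incomparability is a forcing argument.  Since a computable transformation is a c.e. set of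
  pairs, there are only countably many of them, indexed by partial recursive functions r.  From
  the diagram of any copy of S(Y) one reads off the graph of Y, so each r induces an operator
  V_r sending X to the set of pairs (n, b) "claimed" by the image of S(X).  Each V_r is
  continuous: a claim is made on the basis of finitely many bits of X.  A Cantor-style tree
  construction then yields a perfect family of sets (Y_f)_{f \<in> 2^\<omega>} with
  V_r(Y_f) \<noteq> graph(Y_g) for all r and all f \<noteq> g, hence K_{Y_f} \<not>\<le>c K_{Y_g}.
*)


section \<open>Partial recursive functions: determinism and finite c.e. sets\<close>

inductive_cases Zf_E: "reval Zf xs y"
inductive_cases Sf_E: "reval Sf xs y"
inductive_cases Proj_E: "reval (Proj i) xs y"
inductive_cases Comp_E: "reval (Comp f gs) xs y"
inductive_cases Prec_E: "reval (Prec f g) xs y"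
inductive_cases Minf_E: "reval (Minf f) xs y"

lemma list_all2_reval_det:
  "list_all2 (\<lambda>g y. reval g xs y \<and> (\<forall>y'. reval g xs y' \<longrightarrow> y = y')) gs ys
   \<Longrightarrow> list_all2 (\<lambda>g y. reval g xs y) gs ys' \<Longrightarrow> ys = ys'"
proof (induction gs arbitrary: ys ys')
  case (Cons g gs)
  then show ?case unfolding list_all2_Cons1 by blast
qed simp

lemma reval_det: "reval f xs y \<Longrightarrow> reval f xs y' \<Longrightarrow> y = y'"
proof (induction arbitrary: y' rule: reval.induct)
  case (comp xs gs ys f z)
  from comp.prems obtain ys' where a: "list_all2 (\<lambda>g y. reval g xs y) gs ys'" "reval f ys' y'"
    by (rule Comp_E) simp
  have "list_all2 (\<lambda>g y. reval g xs y \<and> (\<forall>y'. reval g xs y' \<longrightarrow> y = y')) gs ys"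
    using comp.IH(1) by (rule list_all2_mono) simp
  then have "ys = ys'" using a(1) by (rule list_all2_reval_det)
  with a(2) comp.IH(2) show ?case by blast
next
  case (prec0 f xs y g)
  from prec0.prems show ?case by (rule Prec_E) (use prec0.IH in auto)
next
  case (precS f g n xs y z)
  from precS.prems obtain y2 where "reval (Prec f g) (n # xs) y2" "reval g (y2 # n # xs) y'"
    by (rule Prec_E) blast+
  with precS.IH show ?case by blast
next
  case (mini f n xs)
  from mini.prems obtain zero: "reval f (y' # xs) 0" and pos: "\<forall>i<y'. \<exists>v. reval f (i # xs) (Suc v)"
    by (rule Minf_E) simp
  have "\<not> n < y'" using pos mini.IH(1) by force
  moreover have "\<not> y' < n" using zero mini.IH(2) by force
  ultimately show ?case by simp
qed (auto elim: Zf_E Sf_E Proj_E)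

lemma reval_proj: "i < length xs \<Longrightarrow> y = xs ! i \<Longrightarrow> reval (Proj i) xs y"
  using reval.proj by simp

lemma reval_precS: "reval (Prec f g) (n # xs) y \<Longrightarrow> reval g (y # n # xs) z \<Longrightarrow> m = Suc n
  \<Longrightarrow> reval (Prec f g) (m # xs) z"
  using reval.precS by simp

lemma reval_Prec_total:
  assumes "reval f xs y0" and "\<And>y n. \<exists>z. reval g (y # n # xs) z"
  shows "\<exists>y. reval (Prec f g) (n # xs) y"
proof (induction n)
  case 0 show ?case using reval.prec0[OF assms(1)] by blast
next
  case (Suc n)
  then obtain y where "reval (Prec f g) (n # xs) y" by blast
  with assms(2) show ?case by (metis reval.precS)
qed

definition one_rf :: recf where "one_rf = Comp Sf [Zf]"

lemma one_rf_val: "reval one_rf xs 1"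
  unfolding one_rf_def by (rule reval.comp[of _ _ "[0]"]) (auto intro: reval.intros)

text \<open>Characteristic function (0 = yes, 1 = no) of the singleton {c}.\<close>
fun eq_rf :: "nat \<Rightarrow> recf" where
  "eq_rf 0 = Prec Zf one_rf"
| "eq_rf (Suc c) = Prec one_rf (Comp (eq_rf c) [Proj 1])"

lemma eq_rf_val: "reval (eq_rf c) [x] (if x = c then 0 else 1)"
proof (induction c arbitrary: x)
  case 0
  have tot: "\<exists>y. reval (Prec Zf one_rf) [m] y" for m
    by (rule reval_Prec_total) (auto intro: reval.intros one_rf_val)
  show ?case
  proof (cases x)
    case (Suc n)
    from tot[of n] obtain y where "reval (Prec Zf one_rf) [n] y" by blast
    from reval_precS[OF this one_rf_val] Suc show ?thesis by simp
  qed (auto intro: reval.intros)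
next
  case (Suc c)
  have g: "reval (Comp (eq_rf c) [Proj 1]) [y, n] (if n = c then 0 else 1)" for y n
    by (rule reval.comp[of _ _ "[n]"]) (use Suc.IH[of n] in \<open>auto intro: reval_proj\<close>)
  have tot: "\<exists>y. reval (Prec one_rf (Comp (eq_rf c) [Proj 1])) [n] y" for n
    by (rule reval_Prec_total[OF one_rf_val]) (use g in blast)
  show ?case
  proof (cases x)
    case 0 then show ?thesis using reval.prec0[OF one_rf_val[of "[]"]] by simp
  next
    case (Suc n)
    from tot obtain y where "reval (Prec one_rf (Comp (eq_rf c) [Proj 1])) [n] y" by blast
    from reval_precS[OF this g] Suc show ?thesis by simp
  qed
qed

text \<open>Disjunction in the convention 0 = true: returns 0 if b = 0, and a otherwise.\<close>
definition or_rf :: recf where "or_rf = Prec Zf (Proj 2)"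

lemma or_rf_val: "z = (if b = 0 then 0 else a) \<Longrightarrow> reval or_rf [b, a] z"
proof (cases b)
  case (Suc n)
  have step: "reval (Proj 2) [y, m, a] a" for y m by (rule reval_proj) auto
  obtain y where "reval (Prec Zf (Proj 2)) [n, a] y"
    using reval_Prec_total[OF reval.zero] step by blast
  moreover assume "z = (if b = 0 then 0 else a)"
  ultimately show ?thesis using reval_precS[OF _ step] Suc unfolding or_rf_def by simp
qed (auto simp: or_rf_def intro: reval.intros)

lemma finite_char_rf: "finite S \<Longrightarrow> \<exists>r. \<forall>x. reval r [x] (if x \<in> S then 0 else 1)"
proof (induction rule: finite_induct)
  case empty then show ?case using one_rf_val by auto
next
  case (insert c S)
  then obtain r where r: "\<forall>x. reval r [x] (if x \<in> S then 0 else 1)" by auto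
  have "reval (Comp or_rf [eq_rf c, r]) [x] (if x \<in> insert c S then 0 else 1)" for x
    by (rule reval.comp[of _ _ "[if x = c then 0 else 1, if x \<in> S then 0 else 1]"])
       (use r eq_rf_val in \<open>auto intro: or_rf_val\<close>)
  then show ?case by blast
qed

text \<open>Finite sets are c.e.: search for a zero of the characteristic function.\<close>
lemma finite_ce_set: assumes "finite S" shows "ce_set S"
proof -
  obtain r where r: "\<forall>x. reval r [x] (if x \<in> S then 0 else 1)" using finite_char_rf[OF assms] by auto
  let ?F = "Minf (Comp r [Proj 1])"
  have cv: "reval (Comp r [Proj 1]) [m, x] (if x \<in> S then 0 else 1)" for m x
    by (rule reval.comp[of _ _ "[x]"]) (use r in \<open>auto intro: reval_proj\<close>)
  have "x \<in> S \<longleftrightarrow> (\<exists>y. reval ?F [x] y)" for x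
  proof
    assume "x \<in> S" then show "\<exists>y. reval ?F [x] y"
      using cv[of 0 x] by (auto intro!: reval.mini)
  next
    assume "\<exists>y. reval ?F [x] y"
    then obtain y where "reval (Comp r [Proj 1]) [y, x] 0" by (auto elim: Minf_E)
    from reval_det[OF this cv[of y x]] show "x \<in> S" by (simp split: if_splits)
  qed
  then show ?thesis unfolding ce_set_def by blast
qed


lemma iso_refl: "iso A A"
  unfolding iso_def by (rule exI[of _ id]) auto

lemma iso_sym: assumes "iso A B" shows "iso B A"
proof -
  from assms obtain h where h: "bij_betw h (fst A) (fst B)"
    "\<forall>i as. set as \<subseteq> fst A \<longrightarrow> (snd A i as \<longleftrightarrow> snd B i (map h as))"
    unfolding iso_def by blast
  let ?g = "inv_into (fst A) h"
  have g: "bij_betw ?g (fst B) (fst A)" using h(1) by (rule bij_betw_inv_into)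
  have "snd B i as \<longleftrightarrow> snd A i (map ?g as)" if "set as \<subseteq> fst B" for i as
  proof -
    have s: "set (map ?g as) \<subseteq> fst A" using g that by (auto simp: bij_betw_def)
    have "map h (map ?g as) = map (h \<circ> ?g) as" by simp
    also have "\<dots> = as"
    proof (rule map_idI)
      fix x assume "x \<in> set as"
      with that h(1) have "x \<in> h ` fst A" by (auto simp: bij_betw_def)
      then show "(h \<circ> ?g) x = x" by (simp add: f_inv_into_f)
    qed
    finally have "map h (map ?g as) = as" .
    with h(2) s show ?thesis by metis
  qed
  with g show ?thesis unfolding iso_def by blast
qed

lemma iso_trans: assumes "iso A B" "iso B C" shows "iso A C"
proof -
  from assms(1) obtain h where h: "bij_betw h (fst A) (fst B)"
    "\<forall>i as. set as \<subseteq> fst A \<longrightarrow> (snd A i as \<longleftrightarrow> snd B i (map h as))"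
    unfolding iso_def by blast
  from assms(2) obtain k where k: "bij_betw k (fst B) (fst C)"
    "\<forall>i as. set as \<subseteq> fst B \<longrightarrow> (snd B i as \<longleftrightarrow> snd C i (map k as))"
    unfolding iso_def by blast
  have "snd A i as \<longleftrightarrow> snd C i (map (k \<circ> h) as)" if "set as \<subseteq> fst A" for i as
  proof -
    have "set (map h as) \<subseteq> fst B" using that h(1) by (auto simp: bij_betw_def)
    with h(2) k(2) that show ?thesis by simp
  qed
  with bij_betw_trans[OF h(1) k(1)] show ?thesis unfolding iso_def by blast
qed

lemma diag_pos: "Pos (ARel i as) \<in> diag sig A \<longleftrightarrow>
   i < length sig \<and> length as = sig ! i \<and> set as \<subseteq> fst A \<and> snd A i as"
  unfolding diag_def by auto

lemma diag_neg: "Neg (ARel i as) \<in> diag sig A \<longleftrightarrow>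
   i < length sig \<and> length as = sig ! i \<and> set as \<subseteq> fst A \<and> \<not> snd A i as"
  unfolding diag_def by auto

lemma diag_lit_in: "\<phi> \<in> diag sig A \<Longrightarrow> lit_in sig \<phi>"
  unfolding diag_def by auto

lemma diag_inj:
  assumes "is_struc sig A" "is_struc sig B" "diag sig A = diag sig B"
  shows "A = B"
proof -
  have univ: "fst A = fst B"
  proof -
    have "a \<in> fst C \<longleftrightarrow> Pos (AEq a a) \<in> diag sig C" for a C by (auto simp: diag_def)
    with assms(3) show ?thesis by blast
  qed
  have "snd C i as \<longleftrightarrow> set as \<subseteq> fst C \<and> Pos (ARel i as) \<in> diag sig C"
    if "is_struc sig C" for C i as
    using that by (auto simp: diag_pos is_struc_def)
  then have "snd A i as \<longleftrightarrow> snd B i as" for i as using assms univ by simp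
  with univ show ?thesis by (simp add: prod_eq_iff fun_eq_iff)
qed

lemma finite_diag: assumes "finite (fst A)" shows "finite (diag sig A)"
proof -
  let ?U = "fst A"
  let ?L = "{as. set as \<subseteq> ?U \<and> length as \<le> sum_list sig}"
  let ?atoms = "(\<lambda>(a,b). AEq a b) ` (?U \<times> ?U) \<union> (\<lambda>(i,as). ARel i as) ` ({..<length sig} \<times> ?L)"
  have "finite ?L" using assms by (rule finite_lists_length_le)
  then have "finite (Pos ` ?atoms \<union> Neg ` ?atoms)" using assms by blast
  moreover have "diag sig A \<subseteq> Pos ` ?atoms \<union> Neg ` ?atoms"
    unfolding diag_def by (force intro: elem_le_sum_list)
  ultimately show ?thesis by (rule rev_finite_subset)
qed


text \<open>If all members of K are isomorphic, the constant transformation producing the diagram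
  of a fixed finite member B of K' is a computable embedding.\<close>
lemma single_type_le_c:
  assumes K_iso: "\<forall>A\<in>K. \<forall>A'\<in>K. iso A A'"
    and K'_struc: "\<forall>B\<in>K'. is_struc sig' B"
    and B: "B \<in> K'" "finite (fst B)"
  shows "le_c sig K sig' K'"
proof -
  define \<Phi> :: "(lit set \<times> lit) set" where "\<Phi> = (\<lambda>\<phi>. ({}, \<phi>)) ` diag sig' B"
  have out: "transf_out sig \<Phi> A = diag sig' B" for A
    unfolding transf_out_def \<Phi>_def by auto
  have "is_struc sig ({0}, \<lambda>_ _. False)" unfolding is_struc_def by auto
  then have conds: "\<forall>(\<alpha>, \<phi>)\<in>\<Phi>. finite \<alpha> \<and>
      (\<exists>C. is_struc sig C \<and> finite (fst C) \<and> \<alpha> \<subseteq> diag sig C) \<and> lit_in sig' \<phi>"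
    unfolding \<Phi>_def using diag_lit_in by fastforce
  have "ce_set (pair_code ` \<Phi>)"
    using finite_diag[OF B(2)] unfolding \<Phi>_def by (intro finite_ce_set) auto
  with conds out B(1) have "comp_transf sig K sig' K' \<Phi>" unfolding comp_transf_def by blast
  moreover have "iso A A' \<longleftrightarrow> iso B1 B1'"
    if "A \<in> K" "A' \<in> K" "B1 \<in> K'" "B1' \<in> K'"
       "transf_out sig \<Phi> A = diag sig' B1" "transf_out sig \<Phi> A' = diag sig' B1'" for A A' B1 B1'
  proof -
    have "B1 = B1'" using that K'_struc out by (intro diag_inj[of sig']) auto
    then show ?thesis using that K_iso iso_refl by blast
  qed
  ultimately show ?thesis unfolding le_c_def comp_emb_def by blast
qed

lemma Zp2_PF: "Zp_struc 2 \<in> PF"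
proof -
  have "is_struc PF_sig (Zp_struc 2)" unfolding is_struc_def Zp_struc_def PF_sig_def by auto
  then show ?thesis unfolding PF_def using iso_refl[of "Zp_struc 2"] two_is_prime_nat by blast
qed


section \<open>The successor structures S(Y) and their classes\<close>

text \<open>Language: a unary relation for 0, the binary graph of successor, and a unary relation
  for the set Y.\<close>
definition succ_sig :: "nat list" where "succ_sig = [1, 2, 1]"

definition succ_struc :: "(nat \<Rightarrow> bool) \<Rightarrow> struc" where
  "succ_struc Y = (UNIV, \<lambda>i as. (i = 0 \<and> as = [0]) \<or> (i = 1 \<and> (\<exists>n. as = [n, Suc n]))
                       \<or> (i = 2 \<and> (\<exists>n. as = [n] \<and> Y n)))"

definition succ_class :: "(nat \<Rightarrow> bool) \<Rightarrow> struc set" where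
  "succ_class Y = {A. is_struc succ_sig A \<and> iso (succ_struc Y) A}"

lemma succ_struc_in_class: "succ_struc Y \<in> succ_class Y"
  unfolding succ_class_def is_struc_def succ_struc_def succ_sig_def using iso_refl by auto

lemma succ_class_is_class: "is_class succ_sig (succ_class Y)"
  unfolding is_class_def succ_class_def using iso_trans by blast

lemma succ_class_le_PF: "le_c succ_sig (succ_class Y) PF_sig PF"
proof (rule single_type_le_c)
  show "\<forall>A\<in>succ_class Y. \<forall>A'\<in>succ_class Y. iso A A'"
    unfolding succ_class_def using iso_sym iso_trans by blast
  show "\<forall>B\<in>PF. is_struc PF_sig B" unfolding PF_def by blast
qed (use Zp2_PF in \<open>auto simp: Zp_struc_def\<close>)


section \<open>Computable transformations are indexed by partial recursive functions\<close>

lemma atom_code_inj: "atom_code a = atom_code b \<Longrightarrow> a = b"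
  by (cases a; cases b) (auto simp: prod_encode_eq list_encode_eq)

lemma lit_code_inj: "inj lit_code"
proof (rule injI)
  fix x y assume "lit_code x = lit_code y"
  then show "x = y" by (cases x; cases y) (auto simp: prod_encode_eq dest: atom_code_inj)
qed

lemma pair_code_inj:
  assumes "finite (fst p)" "finite (fst q)" "pair_code p = pair_code q" shows "p = q"
proof -
  from assms(3) have e: "set_encode (lit_code ` fst p) = set_encode (lit_code ` fst q)"
    "lit_code (snd p) = lit_code (snd q)" unfolding pair_code_def by (simp_all add: prod_encode_eq)
  have "lit_code ` fst p = lit_code ` fst q"
    using e(1) set_encode_eq[of "lit_code ` fst p" "lit_code ` fst q"] assms(1,2) by simp
  then have "fst p = fst q" by (metis inj_image_eq_iff lit_code_inj)
  moreover have "snd p = snd q" using lit_code_inj e(2) by (rule injD)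
  ultimately show ?thesis by (simp add: prod_eq_iff)
qed

definition transf_of :: "recf \<Rightarrow> (lit set \<times> lit) set" where
  "transf_of r = {p. finite (fst p) \<and> (\<exists>y. reval r [pair_code p] y)}"

lemma comp_transf_index:
  assumes "comp_transf sig K sig' K' \<Phi>" shows "\<exists>r. \<Phi> = transf_of r"
proof -
  from assms have fin: "\<forall>p\<in>\<Phi>. finite (fst p)" and "ce_set (pair_code ` \<Phi>)"
    unfolding comp_transf_def by auto
  then obtain r where r: "pair_code ` \<Phi> = {n. \<exists>y. reval r [n] y}" unfolding ce_set_def by blast
  have "p \<in> \<Phi> \<longleftrightarrow> p \<in> transf_of r" for p
  proof
    assume p: "p \<in> \<Phi>"
    then have "pair_code p \<in> pair_code ` \<Phi>" by (rule imageI)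
    then have "\<exists>y. reval r [pair_code p] y" using r by simp
    with fin p show "p \<in> transf_of r" unfolding transf_of_def by simp
  next
    assume "p \<in> transf_of r"
    then have "finite (fst p)" "pair_code p \<in> pair_code ` \<Phi>" unfolding transf_of_def using r by auto
    then obtain q where "q \<in> \<Phi>" "pair_code p = pair_code q" by auto
    with fin \<open>finite (fst p)\<close> pair_code_inj[of p q] show "p \<in> \<Phi>" by simp
  qed
  then show ?thesis by (intro exI[of _ r] set_eqI)
qed


section \<open>Decoding the graph of Y from a copy of S(Y)\<close>

text \<open>The literals asserting that x_0, ..., x_n is a successor path from 0 and that x_n lies
  in Y (if b) or not (if not b).\<close>
definition path_lits :: "nat \<Rightarrow> bool \<Rightarrow> nat list \<Rightarrow> lit set" where
  "path_lits n b xs = insert (Pos (ARel 0 [xs!0]))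
      (insert ((if b then Pos else Neg) (ARel 2 [xs!n]))
        ((\<lambda>i. Pos (ARel 1 [xs!i, xs!Suc i])) ` {..<n}))"

definition decode :: "lit set \<Rightarrow> (nat \<times> bool) set" where
  "decode S = {(n, b). \<exists>xs. length xs = Suc n \<and> path_lits n b xs \<subseteq> S}"

definition graph :: "(nat \<Rightarrow> bool) \<Rightarrow> (nat \<times> bool) set" where
  "graph Y = range (\<lambda>n. (n, Y n))"

context
  fixes Y :: "nat \<Rightarrow> bool" and A :: struc and h :: "nat \<Rightarrow> nat"
  assumes h_bij: "bij_betw h UNIV (fst A)"
    and h_hom: "\<And>i as. snd (succ_struc Y) i as \<longleftrightarrow> snd A i (map h as)"
begin

private lemma range_h: "fst A = range h"
  using h_bij by (auto simp: bij_betw_def)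

private lemma rel_zero: "snd A 0 [h m] \<longleftrightarrow> m = 0"
  using h_hom[of 0 "[m]"] by (simp add: succ_struc_def)

private lemma rel_succ: "snd A 1 [h m, h m'] \<longleftrightarrow> m' = Suc m"
  using h_hom[of 1 "[m, m']"] by (simp add: succ_struc_def)

private lemma rel_Y: "snd A 2 [h m] \<longleftrightarrow> Y m"
  using h_hom[of 2 "[m]"] by (simp add: succ_struc_def)

private lemma path_is_standard:
  assumes xs: "path_lits n b xs \<subseteq> diag succ_sig A" and "i \<le> n"
  shows "xs ! i = h i"
  using \<open>i \<le> n\<close>
proof (induction i)
  case 0
  have "Pos (ARel 0 [xs!0]) \<in> diag succ_sig A" using xs unfolding path_lits_def by auto
  then obtain m where "xs ! 0 = h m" "snd A 0 [h m]" using range_h by (auto simp: diag_pos)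
  with rel_zero show ?case by simp
next
  case (Suc i)
  have "Pos (ARel 1 [xs!i, xs!Suc i]) \<in> diag succ_sig A"
    using xs Suc.prems unfolding path_lits_def by auto
  then obtain m where "xs ! Suc i = h m" "snd A 1 [h i, h m]"
    using range_h Suc by (auto simp: diag_pos)
  with rel_succ show ?case by simp
qed

lemma decode_copy: "decode (diag succ_sig A) = graph Y"
proof
  show "decode (diag succ_sig A) \<subseteq> graph Y"
  proof clarify
    fix n b assume "(n, b) \<in> decode (diag succ_sig A)"
    then obtain xs where xs: "path_lits n b xs \<subseteq> diag succ_sig A"
      unfolding decode_def by auto
    have "(if b then Pos else Neg) (ARel 2 [xs!n]) \<in> diag succ_sig A"
      using xs unfolding path_lits_def by auto
    then have "b = Y n" using path_is_standard[OF xs, of n] rel_Y[of n]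
      by (cases b) (auto simp: diag_pos diag_neg)
    then show "(n, b) \<in> graph Y" unfolding graph_def by auto
  qed
next
  show "graph Y \<subseteq> decode (diag succ_sig A)"
  proof (clarsimp simp: graph_def)
    fix n
    let ?xs = "map h [0..<Suc n]"
    have nth: "?xs ! i = h i" if "i \<le> n" for i using that by (simp del: upt_Suc)
    have "path_lits n (Y n) ?xs \<subseteq> diag succ_sig A"
      unfolding path_lits_def
      using nth rel_zero rel_succ rel_Y range_h
      by (cases "Y n") (auto simp: diag_pos diag_neg succ_sig_def simp del: upt_Suc)
    then show "(n, Y n) \<in> decode (diag succ_sig A)"
      unfolding decode_def by (auto intro!: exI[of _ ?xs] simp del: upt_Suc)
  qed
qed

end

lemma decode_succ_class:
  assumes "A \<in> succ_class Y" shows "decode (diag succ_sig A) = graph Y"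
proof -
  from assms obtain h where h: "bij_betw h (fst (succ_struc Y)) (fst A)"
    "\<forall>i as. set as \<subseteq> fst (succ_struc Y) \<longrightarrow> (snd (succ_struc Y) i as \<longleftrightarrow> snd A i (map h as))"
    unfolding succ_class_def iso_def by blast
  have "fst (succ_struc Y) = UNIV" by (simp add: succ_struc_def)
  with h show ?thesis by (intro decode_copy) auto
qed


section \<open>The operators induced by transformations are continuous\<close>

definition agree :: "nat \<Rightarrow> (nat \<Rightarrow> bool) \<Rightarrow> (nat \<Rightarrow> bool) \<Rightarrow> bool" where
  "agree k X X' \<longleftrightarrow> (\<forall>j<k. X' j = X j)"

definition continuous_op :: "((nat \<Rightarrow> bool) \<Rightarrow> (nat \<times> bool) set) \<Rightarrow> bool" where
  "continuous_op V \<longleftrightarrow> (\<forall>X p. p \<in> V X \<longrightarrow> (\<exists>k. \<forall>X'. agree k X X' \<longrightarrow> p \<in> V X'))"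

lemma finite_stable:
  assumes "finite L" "\<forall>l\<in>L. \<exists>k. \<forall>X'. agree k X X' \<longrightarrow> P l X'"
  shows "\<exists>k. \<forall>X'. agree k X X' \<longrightarrow> (\<forall>l\<in>L. P l X')"
  using assms
proof (induction rule: finite_induct)
  case (insert l L)
  then obtain k1 k2 where "\<forall>X'. agree k1 X X' \<longrightarrow> (\<forall>l\<in>L. P l X')" "\<forall>X'. agree k2 X X' \<longrightarrow> P l X'"
    by auto
  then have "\<forall>X'. agree (max k1 k2) X X' \<longrightarrow> (\<forall>l\<in>insert l L. P l X')"
    unfolding agree_def by auto
  then show ?case by blast
qed simp

lemma diag_lit_stable:
  assumes l: "l \<in> diag succ_sig (succ_struc X)"
  shows "\<exists>k. \<forall>X'. agree k X X' \<longrightarrow> l \<in> diag succ_sig (succ_struc X')"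
proof -
  have univ: "fst (succ_struc Z) = UNIV" for Z by (simp add: succ_struc_def)
  have local: "snd (succ_struc X') i as = snd (succ_struc X) i as"
    if "agree (Suc (sum_list as)) X X'" for X' i as
  proof -
    have "\<forall>m\<in>set as. X' m = X m"
      using that unfolding agree_def by (simp add: le_imp_less_Suc member_le_sum_list)
    then show ?thesis unfolding succ_struc_def by auto
  qed
  obtain a where a: "l = Pos a \<or> l = Neg a" by (cases l) auto
  show ?thesis
  proof (cases a)
    case (AEq x y) with l a show ?thesis by (auto simp: diag_def univ)
  next
    case (ARel i as)
    have "\<forall>X'. agree (Suc (sum_list as)) X X' \<longrightarrow> l \<in> diag succ_sig (succ_struc X')"
      using l a local[of as _ i] ARel by (auto simp: diag_pos diag_neg univ)
    then show ?thesis by blast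
  qed
qed

definition induced_op :: "(lit set \<times> lit) set \<Rightarrow> (nat \<Rightarrow> bool) \<Rightarrow> (nat \<times> bool) set" where
  "induced_op \<Phi> X = decode (transf_out succ_sig \<Phi> (succ_struc X))"

text \<open>An output literal is produced from a finite condition, hence is stable.\<close>
lemma transf_out_stable:
  assumes fin: "\<forall>p\<in>\<Phi>. finite (fst p)" and l: "l \<in> transf_out succ_sig \<Phi> (succ_struc X)"
  shows "\<exists>k. \<forall>X'. agree k X X' \<longrightarrow> l \<in> transf_out succ_sig \<Phi> (succ_struc X')"
proof -
  from l obtain \<alpha> where \<alpha>: "\<alpha> \<subseteq> diag succ_sig (succ_struc X)" "(\<alpha>, l) \<in> \<Phi>"
    unfolding transf_out_def by auto
  have "finite \<alpha>" using fin \<alpha>(2) by force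
  moreover have "\<forall>l'\<in>\<alpha>. \<exists>k. \<forall>X'. agree k X X' \<longrightarrow> l' \<in> diag succ_sig (succ_struc X')"
    using \<alpha>(1) diag_lit_stable by blast
  ultimately obtain k where "\<forall>X'. agree k X X' \<longrightarrow> (\<forall>l'\<in>\<alpha>. l' \<in> diag succ_sig (succ_struc X'))"
    using finite_stable[of \<alpha> X "\<lambda>l X'. l \<in> diag succ_sig (succ_struc X')"] by blast
  with \<alpha>(2) show ?thesis unfolding transf_out_def by blast
qed

lemma induced_op_continuous:
  assumes fin: "\<forall>p\<in>\<Phi>. finite (fst p)" shows "continuous_op (induced_op \<Phi>)"
  unfolding continuous_op_def
proof (intro allI impI)
  fix X p assume "p \<in> induced_op \<Phi> X"
  then obtain n b xs where p: "p = (n, b)"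
    and path: "path_lits n b xs \<subseteq> transf_out succ_sig \<Phi> (succ_struc X)" "length xs = Suc n"
    unfolding induced_op_def decode_def by auto
  have "finite (path_lits n b xs)" unfolding path_lits_def by simp
  moreover have "\<forall>l\<in>path_lits n b xs.
      \<exists>k. \<forall>X'. agree k X X' \<longrightarrow> l \<in> transf_out succ_sig \<Phi> (succ_struc X')"
    using path(1) transf_out_stable[OF fin] by blast
  ultimately obtain k where
    "\<forall>X'. agree k X X' \<longrightarrow> (\<forall>l\<in>path_lits n b xs. l \<in> transf_out succ_sig \<Phi> (succ_struc X'))"
    using finite_stable[of _ X "\<lambda>l X'. l \<in> transf_out succ_sig \<Phi> (succ_struc X')"] by blast
  then show "\<exists>k. \<forall>X'. agree k X X' \<longrightarrow> p \<in> induced_op \<Phi> X'"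
    unfolding induced_op_def decode_def using p path(2) by blast
qed


section \<open>A perfect set of sets separated by countably many continuous operators\<close>

definition extends :: "bool list \<Rightarrow> (nat \<Rightarrow> bool) \<Rightarrow> bool" where
  "extends p X \<longleftrightarrow> (\<forall>j<length p. X j = p ! j)"

definition prefix_of :: "bool list \<Rightarrow> bool list \<Rightarrow> bool" where
  "prefix_of p q \<longleftrightarrow> (\<exists>r. q = p @ r)"

definition separated :: "((nat \<Rightarrow> bool) \<Rightarrow> (nat \<times> bool) set) \<Rightarrow> bool list \<Rightarrow> bool list \<Rightarrow> bool" where
  "separated V p q \<longleftrightarrow> (\<forall>X Y. extends p X \<longrightarrow> extends q Y \<longrightarrow> V X \<noteq> graph Y)"

lemma prefix_of_refl: "prefix_of p p" unfolding prefix_of_def by (rule exI[of _ "[]"]) simp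

lemma prefix_of_trans: "prefix_of p q \<Longrightarrow> prefix_of q r \<Longrightarrow> prefix_of p r"
  unfolding prefix_of_def by auto

lemma prefix_of_iff: "prefix_of p q \<longleftrightarrow> length p \<le> length q \<and> (\<forall>j<length p. q ! j = p ! j)"
proof
  assume "prefix_of p q" then show "length p \<le> length q \<and> (\<forall>j<length p. q ! j = p ! j)"
    unfolding prefix_of_def by (auto simp: nth_append)
next
  assume "length p \<le> length q \<and> (\<forall>j<length p. q ! j = p ! j)"
  then have "take (length p) q = p" by (intro nth_equalityI) auto
  then show "prefix_of p q" unfolding prefix_of_def by (metis append_take_drop_id)
qed

lemma prefix_of_nth: "prefix_of p q \<Longrightarrow> j < length p \<Longrightarrow> q ! j = p ! j"
  unfolding prefix_of_iff by auto

lemma extends_prefix: "prefix_of p q \<Longrightarrow> extends q X \<Longrightarrow> extends p X"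
  unfolding extends_def prefix_of_iff by auto

lemma separated_mono:
  "prefix_of p p1 \<Longrightarrow> prefix_of q q1 \<Longrightarrow> separated V p q \<Longrightarrow> separated V p1 q1"
  unfolding separated_def using extends_prefix by blast

lemma prefix_fix_bit:
  assumes "length q \<le> n \<or> q ! n = c"
  shows "\<exists>q'. prefix_of q q' \<and> n < length q' \<and> q' ! n = c"
proof (cases "n < length q")
  case True
  with assms have "q ! n = c" by simp
  with True show ?thesis using prefix_of_refl by blast
next
  case False
  let ?q' = "q @ replicate (n - length q) False @ [c]"
  have "prefix_of q ?q'" unfolding prefix_of_def by blast
  moreover have "n < length ?q'" "?q' ! n = c" using False by (simp_all add: nth_append)
  ultimately show ?thesis by blast
qed

text \<open>Either some extension of p makes V claim a pair (n, b) which an extension of q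
  can contradict, or already (p, q) separates V, since V X must claim the bit of Y just past q.\<close>
lemma separated_extension:
  assumes cont: "continuous_op V"
  shows "\<exists>p' q'. prefix_of p p' \<and> prefix_of q q' \<and> separated V p' q'"
proof (cases "\<exists>X n b. extends p X \<and> (n, b) \<in> V X \<and> (length q \<le> n \<or> q ! n \<noteq> b)")
  case True
  then obtain X n b where X: "extends p X" "(n, b) \<in> V X" "length q \<le> n \<or> q ! n = (\<not> b)"
    by blast
  from cont X(2) obtain k where k: "\<forall>X'. agree k X X' \<longrightarrow> (n, b) \<in> V X'"
    unfolding continuous_op_def by blast
  define p' where "p' = map X [0..<max k (length p)]"
  obtain q' where q': "prefix_of q q'" "n < length q'" "q' ! n = (\<not> b)"
    using prefix_fix_bit[OF X(3)] by blast
  have "prefix_of p p'" unfolding prefix_of_iff p'_def using X(1) unfolding extends_def by auto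
  moreover have "separated V p' q'" unfolding separated_def
  proof (intro allI impI)
    fix X' Y assume "extends p' X'" "extends q' Y"
    then have "agree k X X'" "Y n \<noteq> b"
      using q' unfolding agree_def extends_def p'_def by auto
    with k show "V X' \<noteq> graph Y" unfolding graph_def by auto
  qed
  ultimately show ?thesis using q'(1) by blast
next
  case False
  have "separated V p q" unfolding separated_def
  proof (intro allI impI notI)
    fix X Y assume "extends p X" "extends q Y" "V X = graph Y"
    then show False using False unfolding graph_def by auto
  qed
  then show ?thesis using prefix_of_refl by blast
qed

definition separate :: "((nat \<Rightarrow> bool) \<Rightarrow> (nat \<times> bool) set) \<Rightarrow> bool list \<Rightarrow> bool list
    \<Rightarrow> bool list \<times> bool list" where
  "separate V p q = (SOME pq. prefix_of p (fst pq) \<and> prefix_of q (snd pq) \<and> separated V (fst pq) (snd pq))"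

lemma separate_prop:
  assumes "continuous_op V"
  shows "prefix_of p (fst (separate V p q)) \<and> prefix_of q (snd (separate V p q))
    \<and> separated V (fst (separate V p q)) (snd (separate V p q))"
  unfolding separate_def using someI_ex[where P = "\<lambda>pq. prefix_of p (fst pq)
    \<and> prefix_of q (snd pq) \<and> separated V (fst pq) (snd pq)"] separated_extension[OF assms]
  by fastforce

text \<open>A finite tree is a map from nodes (strings) to labels (strings).  A request (i, s, t)
  extends the labels of s and t so that they separate the i-th operator.\<close>
definition tree_step :: "(nat \<Rightarrow> (nat \<Rightarrow> bool) \<Rightarrow> (nat \<times> bool) set) \<Rightarrow> nat \<times> bool list \<times> bool list
    \<Rightarrow> (bool list \<Rightarrow> bool list) \<Rightarrow> (bool list \<Rightarrow> bool list)" where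
  "tree_step V r T = (case r of (i, s, t) \<Rightarrow>
      (let pq = separate (V i) (T s) (T t) in T(s := fst pq, t := snd pq)))"

lemma tree_step_prefix:
  assumes "\<forall>i. continuous_op (V i)" shows "prefix_of (T u) (tree_step V r T u)"
proof -
  obtain i s t where r: "r = (i, s, t)" by (cases r) auto
  show ?thesis
    using separate_prop[OF assms[rule_format, of i]] prefix_of_refl
    unfolding tree_step_def r Let_def by auto
qed

lemma fold_tree_step_prefix:
  assumes "\<forall>i. continuous_op (V i)" shows "prefix_of (T u) (fold (tree_step V) rs T u)"
proof (induction rs arbitrary: T)
  case (Cons r rs)
  have "prefix_of (T u) (tree_step V r T u)" using assms by (rule tree_step_prefix)
  moreover have "prefix_of (tree_step V r T u) (fold (tree_step V) rs (tree_step V r T) u)"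
    by (rule Cons.IH)
  ultimately show ?case by (simp add: prefix_of_trans[of _ "tree_step V r T u"])
qed (simp add: prefix_of_refl)

lemma fold_tree_step_separated:
  assumes c: "\<forall>i. continuous_op (V i)"
  shows "(i, s, t) \<in> set rs \<Longrightarrow> s \<noteq> t
    \<Longrightarrow> separated (V i) (fold (tree_step V) rs T s) (fold (tree_step V) rs T t)"
proof (induction rs arbitrary: T)
  case (Cons r rs)
  show ?case
  proof (cases "r = (i, s, t)")
    case True
    let ?pq = "separate (V i) (T s) (T t)"
    have "tree_step V r T s = fst ?pq" "tree_step V r T t = snd ?pq"
      unfolding tree_step_def True Let_def using Cons.prems(2) by auto
    then have "separated (V i) (tree_step V r T s) (tree_step V r T t)"
      using separate_prop[OF c[rule_format, of i]] by auto
    then have "separated (V i) (fold (tree_step V) rs (tree_step V r T) s)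
        (fold (tree_step V) rs (tree_step V r T) t)"
      by (rule separated_mono[OF fold_tree_step_prefix[OF c] fold_tree_step_prefix[OF c]])
    then show ?thesis by simp
  next
    case False
    with Cons show ?thesis by simp
  qed
qed simp

definition requests :: "nat \<Rightarrow> (nat \<times> bool list \<times> bool list) list" where
  "requests k = List.product [0..<Suc k]
     (List.product (List.n_lists (Suc k) [True, False]) (List.n_lists (Suc k) [True, False]))"

lemma requests_mem:
  assumes "i \<le> k" "length s = Suc k" "length t = Suc k"
  shows "(i, s, t) \<in> set (requests k)"
proof -
  have strings: "u \<in> set (List.n_lists (Suc k) [True, False])" if "length u = Suc k" for u
    using that unfolding set_n_lists by auto
  have "i \<in> set [0..<Suc k]" using assms(1) by (simp del: upt_Suc)
  with strings[OF assms(2)] strings[OF assms(3)] show ?thesis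
    unfolding requests_def set_product by blast
qed

fun tree :: "(nat \<Rightarrow> (nat \<Rightarrow> bool) \<Rightarrow> (nat \<times> bool) set) \<Rightarrow> nat \<Rightarrow> bool list \<Rightarrow> bool list" where
  "tree V 0 = (\<lambda>_. [])"
| "tree V (Suc k) = fold (tree_step V) (requests k) (\<lambda>s. tree V k (butlast s) @ [last s])"

lemma tree_child:
  assumes c: "\<forall>i. continuous_op (V i)"
  shows "prefix_of (tree V k (butlast s) @ [last s]) (tree V (Suc k) s)"
  using fold_tree_step_prefix[OF c, of "\<lambda>s. tree V k (butlast s) @ [last s]" s] by simp

text \<open>Labels at level k have length at least k, so branches are total.\<close>
lemma tree_length:
  assumes c: "\<forall>i. continuous_op (V i)" shows "k \<le> length (tree V k s)"
proof (induction k arbitrary: s)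
  case (Suc k)
  then show ?case using tree_child[OF c, of k s] unfolding prefix_of_iff
    by (metis Suc_le_mono le_trans length_append_singleton)
qed simp

definition init_seg :: "(nat \<Rightarrow> bool) \<Rightarrow> nat \<Rightarrow> bool list" where
  "init_seg f m = map f [0..<m]"

lemma tree_chain:
  assumes c: "\<forall>i. continuous_op (V i)" and "k \<le> m"
  shows "prefix_of (tree V k (init_seg f k)) (tree V m (init_seg f m))"
  using assms(2)
proof (induction m rule: dec_induct)
  case (step m)
  have "prefix_of (tree V m (init_seg f m)) (tree V (Suc m) (init_seg f (Suc m)))"
    using tree_child[OF c, of m "init_seg f (Suc m)"] prefix_of_trans
    by (fastforce simp: init_seg_def prefix_of_def)
  with step.IH show ?case by (rule prefix_of_trans)
qed (rule prefix_of_refl)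

text \<open>The set attached to the branch f: the union of the labels along f.\<close>
definition branch :: "(nat \<Rightarrow> (nat \<Rightarrow> bool) \<Rightarrow> (nat \<times> bool) set) \<Rightarrow> (nat \<Rightarrow> bool) \<Rightarrow> nat \<Rightarrow> bool" where
  "branch V f n = tree V (Suc n) (init_seg f (Suc n)) ! n"

lemma branch_extends:
  assumes c: "\<forall>i. continuous_op (V i)" shows "extends (tree V k (init_seg f k)) (branch V f)"
  unfolding extends_def
proof (intro allI impI)
  fix j assume j: "j < length (tree V k (init_seg f k))"
  let ?m = "max k (Suc j)"
  have chain_j: "prefix_of (tree V (Suc j) (init_seg f (Suc j))) (tree V ?m (init_seg f ?m))"
    using c by (rule tree_chain) simp
  have chain_k: "prefix_of (tree V k (init_seg f k)) (tree V ?m (init_seg f ?m))"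
    using c by (rule tree_chain) simp
  have "j < length (tree V (Suc j) (init_seg f (Suc j)))"
    using tree_length[OF c, of "Suc j"] by (simp add: Suc_le_eq)
  then have "branch V f j = tree V ?m (init_seg f ?m) ! j"
    unfolding branch_def using prefix_of_nth[OF chain_j] by simp
  also have "\<dots> = tree V k (init_seg f k) ! j" using prefix_of_nth[OF chain_k j] .
  finally show "branch V f j = tree V k (init_seg f k) ! j" .
qed

theorem branch_separated:
  assumes c: "\<forall>i. continuous_op (V i)" and fg: "f \<noteq> g"
  shows "V i (branch V f) \<noteq> graph (branch V g)"
proof -
  from fg obtain n where n: "f n \<noteq> g n" by auto
  let ?k = "max n i"
  have ne: "init_seg f (Suc ?k) \<noteq> init_seg g (Suc ?k)"
  proof
    assume "init_seg f (Suc ?k) = init_seg g (Suc ?k)"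
    then have "init_seg f (Suc ?k) ! n = init_seg g (Suc ?k) ! n" by simp
    with n show False unfolding init_seg_def by (simp del: upt_Suc add: less_Suc_eq_le)
  qed
  have "(i, init_seg f (Suc ?k), init_seg g (Suc ?k)) \<in> set (requests ?k)"
    by (intro requests_mem) (auto simp: init_seg_def)
  from fold_tree_step_separated[OF c this ne]
  have "separated (V i) (tree V (Suc ?k) (init_seg f (Suc ?k))) (tree V (Suc ?k) (init_seg g (Suc ?k)))"
    by simp
  then show ?thesis using branch_extends[OF c] unfolding separated_def by blast
qed


text \<open>There are countably many partial recursive functions, hence countably many transformations.\<close>
instance recf :: countable by countable_datatype

definition all_ops :: "nat \<Rightarrow> (nat \<Rightarrow> bool) \<Rightarrow> (nat \<times> bool) set" where
  "all_ops i = induced_op (transf_of (from_nat i))"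

lemma all_ops_continuous: "\<forall>i. continuous_op (all_ops i)"
  unfolding all_ops_def transf_of_def by (auto intro: induced_op_continuous)

text \<open>If K_X \<le>c K_Y (even via a mere transformation), then some operator of the family sends
  X to the graph of Y.\<close>
lemma le_c_succ_class_op:
  assumes "le_c succ_sig (succ_class X) succ_sig (succ_class Y)"
  shows "\<exists>i. all_ops i X = graph Y"
proof -
  from assms obtain \<Phi> where ct: "comp_transf succ_sig (succ_class X) succ_sig (succ_class Y) \<Phi>"
    unfolding le_c_def comp_emb_def by blast
  from comp_transf_index[OF ct] obtain r where r: "\<Phi> = transf_of r" by blast
  from ct have "\<forall>A\<in>succ_class X. \<exists>B\<in>succ_class Y. transf_out succ_sig \<Phi> A = diag succ_sig B"
    unfolding comp_transf_def by blast
  with succ_struc_in_class obtain B where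
    B: "B \<in> succ_class Y" "transf_out succ_sig \<Phi> (succ_struc X) = diag succ_sig B"
    by blast
  have "all_ops (to_nat r) X = decode (diag succ_sig B)"
    unfolding all_ops_def induced_op_def using B(2) r by simp
  also have "\<dots> = graph Y" using B(1) by (rule decode_succ_class)
  finally show ?thesis by blast
qed

theorem proposition4p1:
  shows "\<exists>(sig :: (nat \<Rightarrow> bool) \<Rightarrow> nat list) (K :: (nat \<Rightarrow> bool) \<Rightarrow> struc set).
           (\<forall>f. is_class (sig f) (K f) \<and> le_c (sig f) (K f) PF_sig PF) \<and>
           (\<forall>f g. f \<noteq> g \<longrightarrow> incomparable (sig f) (K f) (sig g) (K g))"
proof (intro exI[of _ "\<lambda>_. succ_sig"] exI[of _ "\<lambda>f. succ_class (branch all_ops f)"] conjI allI impI)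
  fix f
  show "is_class succ_sig (succ_class (branch all_ops f))" by (rule succ_class_is_class)
  show "le_c succ_sig (succ_class (branch all_ops f)) PF_sig PF" by (rule succ_class_le_PF)
next
  have no_le: "\<not> le_c succ_sig (succ_class (branch all_ops f)) succ_sig (succ_class (branch all_ops g))"
    if "f \<noteq> g" for f g
    using le_c_succ_class_op branch_separated[OF all_ops_continuous that] by blast
  fix f g :: "nat \<Rightarrow> bool" assume "f \<noteq> g"
  then show "incomparable succ_sig (succ_class (branch all_ops f)) succ_sig (succ_class (branch all_ops g))"
    unfolding incomparable_def using no_le by (simp add: eq_commute)
qed

end
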